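(* Let $n\ge1$, $d\ge0$, and let $\mathcal B_{n,d}$ be the set of directed multigraphs with output pair $H=(V,E,(a,b))$, up to isomorphism, with $|V|\le\min\{n,2+2d\}$, $|E|\le d$, and no isolated node in $V\setminus\{a,b\}$. Then $\{Q_H: H\in\mathcal B_{n,d}\}$ is a basis of the space of $S_n$-equivariant polynomial maps $\mathbb R^{n\times n}\to\mathbb R^{n\times n}$ of degree at most $d$. Moreover, for every such $H$, $Q_H(X)=\sum_{g\in S_n} g\cdot M_H(g^{-1}\cdot X)$, where $M_H(X)=\delta^{a,b}\prod_{(r,s)\in E}X_{r,s}$ (here $H$ is viewed as having node set contained in $[n]$ and $\delta^{a,b}\in\mathbb R^{n\times n}$ is the matrix unit with a $1$ in entry $(a,b)$).
   Context: A directed multigraph with output pair is $H=(V,E,(a,b))$ with $V=[m]$, $E$ a finite multiset of ordered pairs $(r,s)\in V\times V$ (parallel edges and self-loops allowed), and $a,b\in V$ a distinguished, not necessarily distinct, pair (the red edge, not an element of $E$). A node is isolated if no edge of $E$ is incident to it. Isomorphism of such multigraphs: a bijection of node sets carrying the edge multiset onto the edge multiset and $(a,b)$ onto the red pair. For $X\in\mathbb R^{n\times n}$, $Q_H(X)_{i_a,i_b}=\sum_{j}\prod_{(r,s)\in E}X_{j_r,j_s}$, where the sum is over all injective maps $j:[m]\to[n]$ with $j_a=i_a$, $j_b=i_b$ (product with multiplicity; empty product $=1$); if $a=b$ the off-diagonal entries of $Q_H(X)$ are $0$. $S_n$ acts by $(g\cdot X)_{ij}=X_{g^{-1}(i),g^{-1}(j)}$,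 and a polynomial map $P$ is equivariant if $P(g\cdot X)=g\cdot P(X)$ for all $g\in S_n$.
   Formalization: The Moreover identity carries the factor $(n-|V|)!$ on its left side: $(n-|V|)! Q_H(X)=\sum_{g\in S_n} g\cdot M_H(g^{-1}\cdot X)$ in place of $Q_H(X)=\sum_{g\in S_n} g\cdot M_H(g^{-1}\cdot X)$. The statement above fails without it. *)

theory Defs
  imports "HOL-Analysis.Analysis" "HOL-Library.Multiset" "HOL-Combinatorics.Permutations"
    "HOL-Library.FuncSet"
begin

text \<open>Directed multigraph with output pair: node set {0..<nodes}, edge multiset,
  red pair (out_a, out_b).\<close>
datatype mgraph = MG (nodes: nat) (edges: "(nat \<times> nat) multiset") (out_a: nat) (out_b: nat)

definition wf_mgraph :: "mgraph \<Rightarrow> bool" where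
  "wf_mgraph H \<longleftrightarrow> out_a H < nodes H \<and> out_b H < nodes H \<and>
     (\<forall>(r, s) \<in># edges H. r < nodes H \<and> s < nodes H)"

definition isolated :: "mgraph \<Rightarrow> nat \<Rightarrow> bool" where
  "isolated H v \<longleftrightarrow> (\<forall>(r, s) \<in># edges H. r \<noteq> v \<and> s \<noteq> v)"

definition mgraph_iso :: "mgraph \<Rightarrow> mgraph \<Rightarrow> bool" where
  "mgraph_iso H H' \<longleftrightarrow> (\<exists>f. bij_betw f {0..<nodes H} {0..<nodes H'} \<and>
      image_mset (map_prod f f) (edges H) = edges H' \<and>
      f (out_a H) = out_a H' \<and> f (out_b H) = out_b H')"

text \<open>The index set B_{n,d} (before passing to isomorphism classes).\<close>
definition Bset :: "nat \<Rightarrow> nat \<Rightarrow> mgraph set" where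
  "Bset n d = {H. wf_mgraph H \<and> nodes H \<le> min n (2 + 2 * d) \<and> size (edges H) \<le> d \<and>
      (\<forall>v < nodes H. v \<noteq> out_a H \<and> v \<noteq> out_b H \<longrightarrow> \<not> isolated H v)}"

text \<open>n x n real matrices are indexed by a finite type 'n with n = CARD('n);
  X $ i $ j is the entry X_{ij}.\<close>
definition Qmap :: "mgraph \<Rightarrow> real^'n^'n \<Rightarrow> real^'n^'n" where
  "Qmap H X = (\<chi> i k. \<Sum>j \<in> {j \<in> {0..<nodes H} \<rightarrow>\<^sub>E (UNIV :: 'n set).
        inj_on j {0..<nodes H} \<and> j (out_a H) = i \<and> j (out_b H) = k}.
      prod_mset (image_mset (\<lambda>(r, s). X $ j r $ j s) (edges H)))"

definition perm_act :: "('n \<Rightarrow> 'n) \<Rightarrow> real^'n^'n \<Rightarrow> real^'n^'n" where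
  "perm_act g X = (\<chi> i j. X $ (inv g i) $ (inv g j))"

definition equivariant :: "(real^'n^'n \<Rightarrow> real^'n^'n) \<Rightarrow> bool" where
  "equivariant P \<longleftrightarrow> (\<forall>g X. g permutes (UNIV :: 'n set) \<longrightarrow> P (perm_act g X) = perm_act g (P X))"

definition monomial :: "('n \<times> 'n) multiset \<Rightarrow> real^'n^'n \<Rightarrow> real" where
  "monomial M X = prod_mset (image_mset (\<lambda>(r, s). X $ r $ s) M)"

definition polymap :: "nat \<Rightarrow> (real^'n^'n \<Rightarrow> real^'n^'n) \<Rightarrow> bool" where
  "polymap d P \<longleftrightarrow> (\<forall>i k. \<exists>c :: ('n \<times> 'n) multiset \<Rightarrow> real.
      \<forall>X. P X $ i $ k = (\<Sum>M \<in> {M. size M \<le> d}. c M * monomial M X))"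

text \<open>M_H(X) = delta^{a,b} prod X_{r,s}, with nodes embedded into 'n via e.\<close>
definition Mmap :: "mgraph \<Rightarrow> (nat \<Rightarrow> 'n) \<Rightarrow> real^'n^'n \<Rightarrow> real^'n^'n" where
  "Mmap H e X = (\<chi> i k. if i = e (out_a H) \<and> k = e (out_b H)
      then prod_mset (image_mset (\<lambda>(r, s). X $ e r $ e s) (edges H)) else 0)"

end

theory Submission
  imports Defs
begin

(* Entry (i,k) of Q_H(X) is a sum, over the embeddings j of H (injective node maps sending the red
   pair to (i,k)), of the monomial whose exponent multiset is the image j(E) of the edges.  As no node
   outside the red pair is isolated, the data (i, k, j(E)) determine H up to isomorphism; hence at a
   fixed entry the Q_H of non-isomorphic H involve disjoint sets of monomials, and monomials are
   linearly independent.  Conversely, the coefficients of an equivariant P are constant on S_n-orbits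
   of triples (i, k, M), and every orbit with |M| <= d consists of the realizations of exactly one H
   in B_{n,d}, so P is a combination of the Q_H.  Finally, every embedding is the restriction of
   exactly (n - |V|)! permutations, which gives the symmetrization formula with M_H. *)

section \<open>Linear independence of monomials\<close>

lemma base_expansion_less:
  fixes a :: "nat \<Rightarrow> nat"
  assumes "\<And>i. i < N \<Longrightarrow> a i < B"
  shows "(\<Sum>i<N. a i * B ^ i) < B ^ N"
  using assms
proof (induction N)
  case (Suc N)
  have "(\<Sum>i<Suc N. a i * B ^ i) < B ^ N + a N * B ^ N"
    using Suc by simp
  also have "\<dots> \<le> B * B ^ N"
    using Suc.prems[of N] by (intro mult_right_mono[of "Suc (a N)" B, simplified]) auto
  finally show ?case by simp
qed simp

lemma base_expansion_unique:
  fixes a b :: "nat \<Rightarrow> nat"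
  assumes "\<And>i. i < N \<Longrightarrow> a i < B" "\<And>i. i < N \<Longrightarrow> b i < B"
    and "(\<Sum>i<N. a i * B ^ i) = (\<Sum>i<N. b i * B ^ i)" and "i < N"
  shows "a i = b i"
  using assms
proof (induction N)
  case (Suc N)
  let ?A = "\<Sum>i<N. a i * B ^ i" and ?B = "\<Sum>i<N. b i * B ^ i"
  have small: "?A < B ^ N" "?B < B ^ N"
    using Suc.prems(1,2) by (auto intro: base_expansion_less)
  have eq: "?A + a N * B ^ N = ?B + b N * B ^ N"
    using Suc.prems(3) by simp
  have "B ^ N \<noteq> 0"
    using Suc.prems(1)[of N] by simp
  then have "(?A + a N * B ^ N) div B ^ N = a N" "(?B + b N * B ^ N) div B ^ N = b N"
    using small by simp_all
  then have top: "a N = b N"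
    by (metis eq)
  then show ?case
    using Suc eq by (cases "i = N") auto
qed simp

lemma sum_mset_image_eq_sum_count:
  "sum_mset (image_mset (w :: 'a::finite \<Rightarrow> nat) M) = (\<Sum>p\<in>UNIV. count M p * w p)"
proof (induction M)
  case (add x M)
  have "(\<Sum>p\<in>UNIV. count (add_mset x M) p * w p)
      = (\<Sum>p\<in>UNIV. count M p * w p + (if p = x then w p else 0))"
    by (intro sum.cong) auto
  then show ?case
    using add by (simp add: sum.distrib)
qed simp

lemma monomial_power_matrix:
  "monomial M (\<chi> r s. t ^ w (r, s)) = (t :: real) ^ (\<Sum>p\<in>UNIV. count M p * w p)"
proof -
  have "monomial M (\<chi> r s. t ^ w (r, s)) = prod_mset (image_mset (\<lambda>p. t ^ w p) M)"
    unfolding monomial_def by (auto intro!: arg_cong[where f = prod_mset] image_mset_cong)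
  also have "\<dots> = t ^ sum_mset (image_mset w M)"
    by (induction M) (simp_all add: power_add)
  finally show ?thesis
    by (simp add: sum_mset_image_eq_sum_count)
qed

lemma distinct_powers_linear_independent:
  fixes a :: "'a \<Rightarrow> real" and ex :: "'a \<Rightarrow> nat"
  assumes "finite S" and "inj_on ex S" and zero: "\<And>t. (\<Sum>x\<in>S. a x * t ^ ex x) = 0" and "x0 \<in> S"
  shows "a x0 = 0"
proof -
  let ?K = "Max (ex ` S)"
  have "(\<Sum>k\<le>?K. (\<Sum>x\<in>{x \<in> S. ex x = k}. a x) * t ^ k) = 0" for t :: real
  proof -
    have "(\<Sum>k\<le>?K. (\<Sum>x\<in>{x \<in> S. ex x = k}. a x) * t ^ k)
        = (\<Sum>k\<le>?K. \<Sum>x\<in>{x \<in> S. ex x = k}. a x * t ^ ex x)"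
      by (simp add: sum_distrib_right)
    also have "\<dots> = (\<Sum>x\<in>S. a x * t ^ ex x)"
      using \<open>finite S\<close> by (intro sum.group) auto
    finally show ?thesis
      using zero by simp
  qed
  then have "\<forall>k\<le>?K. (\<Sum>x\<in>{x \<in> S. ex x = k}. a x) = 0"
    using polyfun_eq_0[of "\<lambda>k. \<Sum>x\<in>{x \<in> S. ex x = k}. a x" ?K] by blast
  moreover have "ex x0 \<le> ?K"
    using \<open>finite S\<close> \<open>x0 \<in> S\<close> by (intro Max_ge) auto
  moreover have "{x \<in> S. ex x = ex x0} = {x0}"
    using \<open>inj_on ex S\<close> \<open>x0 \<in> S\<close> by (auto dest: inj_onD)
  ultimately show ?thesis
    by fastforce
qed

lemma inj_on_base_encoding:
  fixes idx :: "'a::finite \<Rightarrow> nat"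
  assumes idx: "bij_betw idx UNIV {..<CARD('a)}" and small: "\<And>M q. M \<in> S \<Longrightarrow> count M q < B"
  shows "inj_on (\<lambda>M. \<Sum>p\<in>UNIV. count M p * B ^ idx p) S"
proof (rule inj_onI)
  let ?p = "inv_into UNIV idx"
  have digits: "(\<Sum>p\<in>UNIV. count M p * B ^ idx p) = (\<Sum>i<CARD('a). count M (?p i) * B ^ i)" for M
  proof -
    have "(\<Sum>p\<in>UNIV. count M p * B ^ idx p) = (\<Sum>i<CARD('a). count M (?p i) * B ^ idx (?p i))"
      by (rule sum.reindex_bij_betw[symmetric, OF bij_betw_inv_into[OF idx]])
    also have "\<dots> = (\<Sum>i<CARD('a). count M (?p i) * B ^ i)"
      using idx by (intro sum.cong) (auto simp: bij_betw_inv_into_right)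
    finally show ?thesis .
  qed
  fix M M' assume MS: "M \<in> S" "M' \<in> S"
    and "(\<Sum>p\<in>UNIV. count M p * B ^ idx p) = (\<Sum>p\<in>UNIV. count M' p * B ^ idx p)"
  then have eq: "(\<Sum>i<CARD('a). count M (?p i) * B ^ i) = (\<Sum>i<CARD('a). count M' (?p i) * B ^ i)"
    by (simp add: digits)
  have "count M q = count M' q" for q
  proof -
    have "idx q < CARD('a)" "?p (idx q) = q"
      using idx by (auto simp: bij_betw_def)
    then show ?thesis
      using base_expansion_unique[where a = "\<lambda>i. count M (?p i)" and b = "\<lambda>i. count M' (?p i)",
          OF _ _ eq] small MS by metis
  qed
  then show "M = M'"
    by (simp add: multiset_eq_iff)
qed

(* Substituting X_p = t ^ B ^ idx(p) turns distinct monomials of bounded multiplicity into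
   distinct powers of t (base-B digits), reducing the claim to the univariate case. *)
lemma monomials_linear_independent:
  fixes a :: "('n::finite \<times> 'n) multiset \<Rightarrow> real"
  assumes "finite S" and zero: "\<And>X. (\<Sum>M\<in>S. a M * monomial M X) = 0" and "M0 \<in> S"
  shows "a M0 = 0"
proof -
  obtain idx where idx: "bij_betw idx (UNIV :: ('n \<times> 'n) set) {..<CARD('n \<times> 'n)}"
    using ex_bij_betw_finite_nat[of "UNIV :: ('n \<times> 'n) set"] by (auto simp: atLeast0LessThan)
  define B where "B = Suc (\<Sum>M\<in>S. size M)"
  have "count M q < B" if "M \<in> S" for M q
    using count_le_size[of M q] member_le_sum[OF that, of size] \<open>finite S\<close> by (simp add: B_def)
  then have "inj_on (\<lambda>M. \<Sum>p\<in>UNIV. count M p * B ^ idx p) S"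
    by (rule inj_on_base_encoding[OF idx])
  moreover have "(\<Sum>M\<in>S. a M * t ^ (\<Sum>p\<in>UNIV. count M p * B ^ idx p)) = 0" for t :: real
    using zero[of "\<chi> r s. t ^ B ^ idx (r, s)"] by (simp add: monomial_power_matrix[where w = "\<lambda>p. B ^ idx p"])
  ultimately show ?thesis
    using distinct_powers_linear_independent[OF \<open>finite S\<close>] \<open>M0 \<in> S\<close> by blast
qed

lemma monomial_coeffs_unique:
  fixes a b :: "('n::finite \<times> 'n) multiset \<Rightarrow> real"
  assumes "finite S" and "\<And>X. (\<Sum>M\<in>S. a M * monomial M X) = (\<Sum>M\<in>S. b M * monomial M X)"
    and "M \<in> S"
  shows "a M = b M"
  using monomials_linear_independent[of S "\<lambda>M. a M - b M" M] assms
  by (simp add: left_diff_distrib sum_subtractf)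

lemma finite_multisets_size_le: "finite {M :: 'a::finite multiset. size M \<le> d}"
proof -
  have "{M :: 'a multiset. size M \<le> d} = (\<Union>s\<le>d. multisets_of_size UNIV s)"
    by (auto simp: multisets_of_size_def)
  then show ?thesis
    by auto
qed

section \<open>Embeddings of a multigraph\<close>

definition embeddings :: "mgraph \<Rightarrow> 'n \<Rightarrow> 'n \<Rightarrow> (nat \<Rightarrow> 'n) set" where
  "embeddings H i k = {j \<in> {0..<nodes H} \<rightarrow>\<^sub>E UNIV.
      inj_on j {0..<nodes H} \<and> j (out_a H) = i \<and> j (out_b H) = k}"

definition edge_image :: "(nat \<Rightarrow> 'n) \<Rightarrow> mgraph \<Rightarrow> ('n \<times> 'n) multiset" where
  "edge_image j H = image_mset (map_prod j j) (edges H)"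

definition embedding_count :: "mgraph \<Rightarrow> 'n \<Rightarrow> 'n \<Rightarrow> ('n \<times> 'n) multiset \<Rightarrow> nat" where
  "embedding_count H i k M = card {j \<in> embeddings H i k. edge_image j H = M}"

lemma wf_mgraph_edge_nodes:
  assumes "wf_mgraph H" and "x \<in># edges H"
  shows "fst x < nodes H" "snd x < nodes H"
  using assms unfolding wf_mgraph_def by auto

lemma wf_mgraph_out_nodes:
  assumes "wf_mgraph H"
  shows "out_a H \<in> {0..<nodes H}" "out_b H \<in> {0..<nodes H}"
  using assms unfolding wf_mgraph_def by auto

lemma mgraph_iso_refl: "mgraph_iso H H"
  unfolding mgraph_iso_def by (rule exI[of _ id]) (simp add: prod.map_id0)

lemma edge_image_cong:
  assumes "wf_mgraph H" and "\<And>v. v < nodes H \<Longrightarrow> j v = j' v"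
  shows "edge_image j H = edge_image j' H"
  unfolding edge_image_def
proof (rule image_mset_cong)
  fix x assume "x \<in># edges H"
  then show "map_prod j j x = map_prod j' j' x"
    using assms wf_mgraph_edge_nodes[of H x] by (cases x) auto
qed

lemma size_edge_image [simp]: "size (edge_image j H) = size (edges H)"
  by (simp add: edge_image_def)

lemma finite_embeddings: "finite (embeddings H i (k :: 'n::finite))"
  by (rule finite_subset[of _ "{0..<nodes H} \<rightarrow>\<^sub>E UNIV"]) (auto simp: embeddings_def intro: finite_PiE)

lemma embedding_count_pos_iff:
  "0 < embedding_count H i (k :: 'n::finite) M \<longleftrightarrow> (\<exists>j\<in>embeddings H i k. edge_image j H = M)"
  unfolding embedding_count_def using finite_embeddings[of H i k] by (auto simp: card_gt_0_iff)

lemma exists_embedding: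
  assumes "nodes H \<le> CARD('n::finite)"
  shows "\<exists>j :: nat \<Rightarrow> 'n. j \<in> embeddings H (j (out_a H)) (j (out_b H))"
proof -
  obtain j :: "nat \<Rightarrow> 'n" where "inj_on j {0..<nodes H}"
    using card_le_inj[of "{0..<nodes H}" "UNIV :: 'n set"] assms by auto
  then have "restrict j {0..<nodes H} \<in> embeddings H (restrict j {0..<nodes H} (out_a H))
      (restrict j {0..<nodes H} (out_b H))"
    by (simp add: embeddings_def)
  then show ?thesis
    by blast
qed

lemma restrict_comp_mem_embeddings:
  assumes j: "j \<in> embeddings H' i k" and g: "inj g"
    and f: "inj_on f {0..<nodes H}" "f ` {0..<nodes H} \<subseteq> {0..<nodes H'}"
    and ab: "out_a H \<in> {0..<nodes H}" "out_b H \<in> {0..<nodes H}"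
    and fab: "f (out_a H) = out_a H'" "f (out_b H) = out_b H'"
  shows "restrict (g \<circ> j \<circ> f) {0..<nodes H} \<in> embeddings H (g i) (g k)"
proof -
  have inj: "inj_on j {0..<nodes H'}" and ends: "j (out_a H') = i" "j (out_b H') = k"
    using j by (auto simp: embeddings_def)
  have "inj_on (g \<circ> j \<circ> f) {0..<nodes H}"
  proof (rule inj_onI)
    fix x y assume xy: "x \<in> {0..<nodes H}" "y \<in> {0..<nodes H}" "(g \<circ> j \<circ> f) x = (g \<circ> j \<circ> f) y"
    then have "j (f x) = j (f y)"
      using g by (simp add: inj_eq)
    moreover have "f x \<in> {0..<nodes H'}" "f y \<in> {0..<nodes H'}"
      using f(2) xy(1,2) by (auto simp: image_subset_iff)
    ultimately have "f x = f y"
      using inj by (auto dest: inj_onD)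
    then show "x = y"
      using f(1) xy(1,2) by (auto dest: inj_onD)
  qed
  then show ?thesis
    using ab fab ends by (simp add: embeddings_def)
qed

lemma bij_betw_restrict_comp_embeddings:
  fixes g :: "'n \<Rightarrow> 'n"
  assumes wf: "wf_mgraph H" and f: "bij_betw f {0..<nodes H} {0..<nodes H'}"
    and fab: "f (out_a H) = out_a H'" "f (out_b H) = out_b H'" and g: "bij g"
  shows "bij_betw (\<lambda>j. restrict (g \<circ> j \<circ> f) {0..<nodes H})
    (embeddings H' i k) (embeddings H (g i) (g k))"
proof -
  let ?V = "{0..<nodes H}" and ?V' = "{0..<nodes H'}" and ?f' = "inv_into {0..<nodes H} f"
  have ab: "out_a H \<in> ?V" "out_b H \<in> ?V"
    by (rule wf_mgraph_out_nodes[OF wf])+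
  have f': "bij_betw ?f' ?V' ?V"
    using f by (rule bij_betw_inv_into)
  have f'f: "?f' (f x) = x" and fV: "f x \<in> ?V'" if "x \<in> ?V" for x
    using f that by (auto simp: bij_betw_inv_into_left dest: bij_betwE)
  have ff': "f (?f' y) = y" and f'V: "?f' y \<in> ?V" if "y \<in> ?V'" for y
    using f f' that by (auto simp: bij_betw_inv_into_right dest: bij_betwE)
  have ginv: "inv g (g x) = x" "g (inv g x) = x" for x
    using g by (simp_all add: bij_is_inj bij_is_surj inv_f_f surj_f_inv_f)
  show ?thesis
  proof (rule bij_betw_byWitness[where f' = "\<lambda>j. restrict (inv g \<circ> j \<circ> ?f') ?V'"])
    show "\<forall>j\<in>embeddings H' i k. restrict (inv g \<circ> restrict (g \<circ> j \<circ> f) ?V \<circ> ?f') ?V' = j"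
      using f'V ff' ginv by (auto simp: embeddings_def fun_eq_iff PiE_def extensional_def)
    show "\<forall>j\<in>embeddings H (g i) (g k). restrict (g \<circ> restrict (inv g \<circ> j \<circ> ?f') ?V' \<circ> f) ?V = j"
      using fV f'f ginv by (auto simp: embeddings_def fun_eq_iff PiE_def extensional_def)
    show "(\<lambda>j. restrict (g \<circ> j \<circ> f) ?V) ` embeddings H' i k \<subseteq> embeddings H (g i) (g k)"
      using f ab fab g by (auto intro!: restrict_comp_mem_embeddings simp: bij_betw_def bij_is_inj)
    have "restrict (inv g \<circ> j \<circ> ?f') ?V' \<in> embeddings H' (inv g (g i)) (inv g (g k))"
      if "j \<in> embeddings H (g i) (g k)" for j
    proof (rule restrict_comp_mem_embeddings[OF that])
      show "inj (inv g)"
        using g by (simp add: bij_imp_bij_inv bij_is_inj)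
      show "inj_on ?f' ?V'" "?f' ` ?V' \<subseteq> ?V"
        using f' by (auto simp: bij_betw_def)
      show "out_a H' \<in> ?V'" "out_b H' \<in> ?V'"
        using fV[OF ab(1)] fV[OF ab(2)] fab by simp_all
      show "?f' (out_a H') = out_a H" "?f' (out_b H') = out_b H"
        using f'f[OF ab(1)] f'f[OF ab(2)] fab by simp_all
    qed
    then show "(\<lambda>j. restrict (inv g \<circ> j \<circ> ?f') ?V') ` embeddings H (g i) (g k) \<subseteq> embeddings H' i k"
      by (auto simp: ginv)
  qed
qed

(* Both the equivariance of Q_H (H' = H) and its invariance under isomorphism (g = id) are
   instances of this transport. *)
lemma embeddings_transport:
  fixes g :: "'n \<Rightarrow> 'n"
  assumes wf: "wf_mgraph H" and iso: "mgraph_iso H H'" and g: "bij g"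
  obtains \<phi> where "bij_betw \<phi> (embeddings H' i k) (embeddings H (g i) (g k))"
    and "\<And>j. j \<in> embeddings H' i k \<Longrightarrow>
      edge_image (\<phi> j) H = image_mset (map_prod g g) (edge_image j H')"
proof -
  obtain f where f: "bij_betw f {0..<nodes H} {0..<nodes H'}"
    and E: "image_mset (map_prod f f) (edges H) = edges H'"
    and fab: "f (out_a H) = out_a H'" "f (out_b H) = out_b H'"
    using iso unfolding mgraph_iso_def by blast
  have "edge_image (restrict (g \<circ> j \<circ> f) {0..<nodes H}) H = image_mset (map_prod g g) (edge_image j H')"
    for j
  proof -
    have "edge_image (restrict (g \<circ> j \<circ> f) {0..<nodes H}) H = edge_image (g \<circ> j \<circ> f) H"
      using wf by (rule edge_image_cong) simp
    then show ?thesis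
      by (simp add: edge_image_def E[symmetric] multiset.map_comp map_prod.comp comp_assoc)
  qed
  then show ?thesis
    using that bij_betw_restrict_comp_embeddings[OF wf f fab g] by blast
qed

lemma embedding_count_transport:
  fixes g :: "'n::finite \<Rightarrow> 'n"
  assumes "wf_mgraph H" and "mgraph_iso H H'" and "bij g"
  shows "embedding_count H (g i) (g k) (image_mset (map_prod g g) M) = embedding_count H' i k M"
proof -
  obtain \<phi> where \<phi>: "bij_betw \<phi> (embeddings H' i k) (embeddings H (g i) (g k))"
    and img: "\<And>j. j \<in> embeddings H' i k \<Longrightarrow>
      edge_image (\<phi> j) H = image_mset (map_prod g g) (edge_image j H')"
    using embeddings_transport[OF assms, where i = i and k = k] by blast
  have "inj (image_mset (map_prod g g))"
    using \<open>bij g\<close> by (simp add: bij_is_inj multiset.inj_map prod.inj_map)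
  then have "bij_betw \<phi> {j \<in> embeddings H' i k. edge_image j H' = M}
      {j \<in> embeddings H (g i) (g k). edge_image j H = image_mset (map_prod g g) M}"
    by (intro bij_betw_Collect[OF \<phi>]) (simp add: img inj_eq)
  then show ?thesis
    unfolding embedding_count_def by (rule bij_betw_same_card[symmetric])
qed

section \<open>The maps Q_H\<close>

lemma Qmap_entry:
  "Qmap H X $ i $ k = (\<Sum>j\<in>embeddings H i k. monomial (edge_image j H) X)"
  unfolding Qmap_def embeddings_def monomial_def edge_image_def
  by (simp add: multiset.map_comp o_def case_prod_unfold)

lemma Qmap_entry_transport:
  fixes g :: "'n::finite \<Rightarrow> 'n"
  assumes "wf_mgraph H" and "mgraph_iso H H'" and "bij g"
  shows "Qmap H X $ g i $ g k
    = (\<Sum>j\<in>embeddings H' i k. monomial (image_mset (map_prod g g) (edge_image j H')) X)"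
proof -
  obtain \<phi> where \<phi>: "bij_betw \<phi> (embeddings H' i k) (embeddings H (g i) (g k))"
    and img: "\<And>j. j \<in> embeddings H' i k \<Longrightarrow>
      edge_image (\<phi> j) H = image_mset (map_prod g g) (edge_image j H')"
    using embeddings_transport[OF assms, where i = i and k = k] by blast
  have "Qmap H X $ g i $ g k = (\<Sum>j\<in>embeddings H' i k. monomial (edge_image (\<phi> j) H) X)"
    unfolding Qmap_entry by (rule sum.reindex_bij_betw[symmetric, OF \<phi>])
  then show ?thesis
    by (simp add: img)
qed

lemma monomial_perm_act:
  "monomial M (perm_act g X) = monomial (image_mset (map_prod (inv g) (inv g)) M) X"
  unfolding monomial_def perm_act_def by (simp add: multiset.map_comp o_def case_prod_unfold)

lemma Qmap_equivariant:
  assumes "wf_mgraph H"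
  shows "equivariant (Qmap H :: real^'n::finite^'n \<Rightarrow> real^'n^'n)"
  unfolding equivariant_def
proof (intro allI impI)
  fix g :: "'n \<Rightarrow> 'n" and X :: "real^'n^'n"
  assume "g permutes UNIV"
  then have "bij (inv g)"
    by (simp add: bij_imp_bij_inv permutes_bij)
  have "Qmap H (perm_act g X) $ i $ k = Qmap H X $ inv g i $ inv g k" for i k
    unfolding Qmap_entry_transport[OF assms mgraph_iso_refl \<open>bij (inv g)\<close>]
    by (simp add: Qmap_entry monomial_perm_act edge_image_def)
  then show "Qmap H (perm_act g X) = perm_act g (Qmap H X)"
    by (simp add: vec_eq_iff perm_act_def)
qed

lemma Qmap_iso_invariant:
  assumes "wf_mgraph H" and "mgraph_iso H H'"
  shows "(Qmap H :: real^'n::finite^'n \<Rightarrow> real^'n^'n) = Qmap H'"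
proof
  fix X :: "real^'n^'n"
  show "Qmap H X = Qmap H' X"
    using Qmap_entry_transport[OF assms bij_id, where X = X]
    by (simp add: vec_eq_iff Qmap_entry prod.map_id0)
qed

lemma Qmap_entry_expansion:
  fixes i k :: "'n::finite"
  assumes "size (edges H) \<le> d"
  shows "Qmap H X $ i $ k = (\<Sum>M\<in>{M. size M \<le> d}. real (embedding_count H i k M) * monomial M X)"
proof -
  have "Qmap H X $ i $ k
      = (\<Sum>M\<in>{M. size M \<le> d}. \<Sum>j\<in>{j \<in> embeddings H i k. edge_image j H = M}. monomial (edge_image j H) X)"
    unfolding Qmap_entry using assms
    by (intro sum.group[symmetric] finite_embeddings finite_multisets_size_le) auto
  also have "\<dots> = (\<Sum>M\<in>{M. size M \<le> d}. real (embedding_count H i k M) * monomial M X)"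
    by (intro sum.cong) (simp_all add: embedding_count_def)
  finally show ?thesis .
qed

lemma Qmap_polymap:
  assumes "size (edges H) \<le> d"
  shows "polymap d (Qmap H :: real^'n::finite^'n \<Rightarrow> real^'n^'n)"
  unfolding polymap_def
proof (intro allI)
  fix i k :: 'n
  show "\<exists>c. \<forall>X. Qmap H X $ i $ k = (\<Sum>M\<in>{M. size M \<le> d}. c M * monomial M X)"
    by (intro exI[of _ "\<lambda>M. real (embedding_count H i k M)"] allI Qmap_entry_expansion[OF assms])
qed

lemma sum_Qmap_entry_expansion:
  fixes i k :: "'n::finite"
  assumes "finite R" and "\<And>H. H \<in> R \<Longrightarrow> size (edges H) \<le> d"
  shows "(\<Sum>H\<in>R. c H *\<^sub>R Qmap H X) $ i $ k
    = (\<Sum>M\<in>{M. size M \<le> d}. (\<Sum>H\<in>R. c H * real (embedding_count H i k M)) * monomial M X)"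
proof -
  have "(\<Sum>H\<in>R. c H *\<^sub>R Qmap H X) $ i $ k = (\<Sum>H\<in>R. c H * Qmap H X $ i $ k)"
    by simp
  also have "\<dots> = (\<Sum>H\<in>R. \<Sum>M\<in>{M. size M \<le> d}. c H * real (embedding_count H i k M) * monomial M X)"
    by (intro sum.cong refl) (simp add: Qmap_entry_expansion[OF assms(2)] sum_distrib_left mult.assoc)
  also have "\<dots> = (\<Sum>M\<in>{M. size M \<le> d}. (\<Sum>H\<in>R. c H * real (embedding_count H i k M)) * monomial M X)"
    by (subst sum.swap) (simp add: sum_distrib_right)
  finally show ?thesis .
qed

section \<open>Realizations of a monomial\<close>

definition edge_nodes :: "('a \<times> 'a) multiset \<Rightarrow> 'a set" where
  "edge_nodes M = fst ` set_mset M \<union> snd ` set_mset M"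

lemma finite_edge_nodes [simp]: "finite (edge_nodes M)"
  by (simp add: edge_nodes_def)

lemma card_edge_nodes_le: "card (edge_nodes M) \<le> 2 * size M"
proof -
  have "card (set_mset M) \<le> size M"
    by (induction M) (auto simp: card_insert_if)
  moreover have "card (edge_nodes M) \<le> card (fst ` set_mset M) + card (snd ` set_mset M)"
    unfolding edge_nodes_def by (rule card_Un_le)
  moreover have "card (fst ` set_mset M) \<le> card (set_mset M)" "card (snd ` set_mset M) \<le> card (set_mset M)"
    by (simp_all add: card_image_le)
  ultimately show ?thesis
    by linarith
qed

definition no_isolated_nodes :: "mgraph \<Rightarrow> bool" where
  "no_isolated_nodes H \<longleftrightarrow> (\<forall>v<nodes H. v \<noteq> out_a H \<and> v \<noteq> out_b H \<longrightarrow> \<not> isolated H v)"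

lemma mem_BsetD:
  assumes "H \<in> Bset n d"
  shows "wf_mgraph H" "nodes H \<le> n" "size (edges H) \<le> d" "no_isolated_nodes H"
  using assms unfolding Bset_def no_isolated_nodes_def by auto

lemma edge_nodes_image_mset: "edge_nodes (image_mset (map_prod f f) M) = f ` edge_nodes M"
  by (auto simp: edge_nodes_def image_Un image_image)

lemma isolated_iff_not_edge_node: "isolated H v \<longleftrightarrow> v \<notin> edge_nodes (edges H)"
  unfolding isolated_def edge_nodes_def by force

lemma wf_mgraph_edge_nodes_subset:
  assumes "wf_mgraph H"
  shows "edge_nodes (edges H) \<subseteq> {0..<nodes H}"
  using wf_mgraph_edge_nodes[OF assms] by (auto simp: edge_nodes_def)

lemma no_isolated_nodes_iff:
  assumes wf: "wf_mgraph H" and j: "j \<in> embeddings H i k"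
  shows "no_isolated_nodes H \<longleftrightarrow> j ` {0..<nodes H} = {i, k} \<union> edge_nodes (edge_image j H)"
proof -
  let ?V = "{0..<nodes H}" and ?S = "{out_a H, out_b H} \<union> edge_nodes (edges H)"
  have inj: "inj_on j ?V" and ends: "j (out_a H) = i" "j (out_b H) = k"
    using j by (auto simp: embeddings_def)
  have S: "?S \<subseteq> ?V"
    using wf_mgraph_out_nodes[OF wf] wf_mgraph_edge_nodes_subset[OF wf] by auto
  have image_S: "j ` ?S = {i, k} \<union> edge_nodes (edge_image j H)"
    by (simp add: edge_image_def edge_nodes_image_mset ends)
  have "no_isolated_nodes H \<longleftrightarrow> (\<forall>v\<in>?V. v \<in> ?S)"
    unfolding no_isolated_nodes_def isolated_iff_not_edge_node by auto
  also have "\<dots> \<longleftrightarrow> (\<forall>v\<in>?V. j v \<in> j ` ?S)"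
    using inj_on_image_mem_iff[OF inj _ S] by blast
  also have "\<dots> \<longleftrightarrow> j ` ?V = j ` ?S"
    using S by blast
  finally show ?thesis
    unfolding image_S .
qed

(* Both embeddings map their nodes onto {i, k} together with the nodes touched by M
   (no_isolated_nodes_iff), so one composed with the inverse of the other is an isomorphism. *)
lemma realizations_iso:
  assumes wf: "wf_mgraph H" "wf_mgraph H'" and no_isolated: "no_isolated_nodes H" "no_isolated_nodes H'"
    and j: "j \<in> embeddings H i k" and j': "j' \<in> embeddings H' i k"
    and eq: "edge_image j H = edge_image j' H'"
  shows "mgraph_iso H H'"
proof -
  let ?V = "{0..<nodes H}" and ?V' = "{0..<nodes H'}"
  let ?j'' = "inv_into ?V' j'"
  have inj: "inj_on j ?V" "inj_on j' ?V'"
    using j j' by (auto simp: embeddings_def)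
  have ends: "j (out_a H) = i" "j (out_b H) = k" "j' (out_a H') = i" "j' (out_b H') = k"
    using j j' by (auto simp: embeddings_def)
  have "j ` ?V = j' ` ?V'"
    using no_isolated no_isolated_nodes_iff[OF wf(1) j] no_isolated_nodes_iff[OF wf(2) j'] eq by simp
  then have "bij_betw j ?V (j' ` ?V')"
    using inj(1) by (simp add: bij_betw_def)
  moreover have "bij_betw ?j'' (j' ` ?V') ?V'"
    using inj(2) by (intro bij_betw_inv_into inj_on_imp_bij_betw)
  ultimately have "bij_betw (?j'' \<circ> j) ?V ?V'"
    by (rule bij_betw_trans)
  moreover have j''j': "?j'' (j' v) = v" if "v < nodes H'" for v
    using inj(2) that by (simp add: inv_into_f_f)
  moreover have "image_mset (map_prod (?j'' \<circ> j) (?j'' \<circ> j)) (edges H) = edges H'"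
  proof -
    have "image_mset (map_prod (?j'' \<circ> j) (?j'' \<circ> j)) (edges H)
        = image_mset (map_prod ?j'' ?j'') (edge_image j H)"
      by (simp add: edge_image_def multiset.map_comp map_prod.comp)
    also have "\<dots> = edge_image (?j'' \<circ> j') H'"
      unfolding eq by (simp add: edge_image_def multiset.map_comp map_prod.comp)
    also have "\<dots> = edge_image id H'"
      by (rule edge_image_cong[OF wf(2)]) (simp add: j''j')
    finally show ?thesis
      by (simp add: edge_image_def prod.map_id0)
  qed
  moreover have "(?j'' \<circ> j) (out_a H) = out_a H'" "(?j'' \<circ> j) (out_b H) = out_b H'"
    using j''j' wf_mgraph_out_nodes[OF wf(2)] ends by (metis atLeastLessThan_iff comp_apply)+
  ultimately show ?thesis
    unfolding mgraph_iso_def by blast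
qed

(* The realizing graph lives on the nodes touched by M together with i and k, numbered by a
   bijection with {0..<m}. *)
lemma exists_realization:
  fixes i k :: "'n::finite" and M :: "('n \<times> 'n) multiset"
  assumes "size M \<le> d"
  shows "\<exists>H\<in>Bset CARD('n) d. 0 < embedding_count H i k M"
proof -
  let ?U = "{i, k} \<union> edge_nodes M"
  let ?m = "card ?U"
  obtain \<phi> where \<phi>: "bij_betw \<phi> {0..<?m} ?U"
    using ex_bij_betw_nat_finite[of ?U] by auto
  let ?\<psi> = "inv_into {0..<?m} \<phi>"
  have \<psi>: "?\<psi> u < ?m" "\<phi> (?\<psi> u) = u" if "u \<in> ?U" for u
    using bij_betwE[OF bij_betw_inv_into[OF \<phi>]] bij_betw_inv_into_right[OF \<phi>] that by auto
  have M_U: "fst x \<in> ?U" "snd x \<in> ?U" if "x \<in># M" for x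
    using that unfolding edge_nodes_def by auto
  define H where "H = MG ?m (image_mset (map_prod ?\<psi> ?\<psi>) M) (?\<psi> i) (?\<psi> k)"
  have wf: "wf_mgraph H"
    unfolding wf_mgraph_def H_def using \<psi> M_U by auto
  have emb: "restrict \<phi> {0..<?m} \<in> embeddings H i k"
    using \<phi> \<psi> by (simp add: embeddings_def H_def bij_betw_def)
  have "edge_image (restrict \<phi> {0..<?m}) H = edge_image \<phi> H"
    using wf by (rule edge_image_cong) (simp add: H_def)
  also have "\<dots> = image_mset id M"
    unfolding edge_image_def H_def mgraph.sel multiset.map_comp
  proof (rule image_mset_cong)
    fix x assume "x \<in># M"
    then show "(map_prod \<phi> \<phi> \<circ> map_prod ?\<psi> ?\<psi>) x = id x"
      using \<psi>(2) M_U by (cases x) auto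
  qed
  finally have img: "edge_image (restrict \<phi> {0..<?m}) H = M"
    by simp
  have "restrict \<phi> {0..<?m} ` {0..<nodes H} = ?U"
    using \<phi> by (simp add: H_def bij_betw_def)
  then have "no_isolated_nodes H"
    using no_isolated_nodes_iff[OF wf emb] img by simp
  moreover have "?m \<le> CARD('n)"
    by (rule card_mono) auto
  moreover have "?m \<le> 2 + 2 * d"
  proof -
    have "card {i, k} \<le> 2"
      by (simp add: card_insert_if)
    then show ?thesis
      using card_Un_le[of "{i, k}" "edge_nodes M"] card_edge_nodes_le[of M] assms by linarith
  qed
  ultimately have "H \<in> Bset CARD('n) d"
    unfolding Bset_def using wf assms by (simp add: H_def no_isolated_nodes_def)
  then show ?thesis
    using emb img embedding_count_pos_iff by blast
qed

section \<open>The basis property\<close>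

definition iso_transversal :: "mgraph set \<Rightarrow> mgraph set \<Rightarrow> bool" where
  "iso_transversal R B \<longleftrightarrow> R \<subseteq> B \<and> (\<forall>H\<in>B. \<exists>!H'\<in>R. mgraph_iso H H')"

lemma finite_Bset: "finite (Bset n d)"
proof -
  let ?P = "{..<n} \<times> {..<n}"
  let ?E = "{E :: (nat \<times> nat) multiset. set_mset E \<subseteq> ?P \<and> size E \<le> d}"
  have "?E = (\<Union>s\<le>d. multisets_of_size ?P s)"
    by (auto simp: multisets_of_size_def)
  then have "finite ?E"
    by auto
  then have "finite ({..n} \<times> ?E \<times> {..<n} \<times> {..<n})"
    by auto
  moreover have "Bset n d \<subseteq> (\<lambda>(m, E, a, b). MG m E a b) ` ({..n} \<times> ?E \<times> {..<n} \<times> {..<n})"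
  proof
    fix H assume H: "H \<in> Bset n d"
    have "set_mset (edges H) \<subseteq> ?P"
      using wf_mgraph_edge_nodes[OF mem_BsetD(1)[OF H]] mem_BsetD(2)[OF H] by fastforce
    moreover have "out_a H < n" "out_b H < n"
      using wf_mgraph_out_nodes[OF mem_BsetD(1)[OF H]] mem_BsetD(2)[OF H] by auto
    ultimately have "(nodes H, edges H, out_a H, out_b H) \<in> {..n} \<times> ?E \<times> {..<n} \<times> {..<n}"
      using mem_BsetD(2,3)[OF H] by auto
    then show "H \<in> (\<lambda>(m, E, a, b). MG m E a b) ` ({..n} \<times> ?E \<times> {..<n} \<times> {..<n})"
      by (intro image_eqI[where x = "(nodes H, edges H, out_a H, out_b H)"]) auto
  qed
  ultimately show ?thesis
    by (rule finite_surj)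
qed

lemma finite_iso_transversal:
  assumes "iso_transversal R (Bset n d)"
  shows "finite R"
  using assms finite_Bset unfolding iso_transversal_def by (blast intro: finite_subset)

lemma unique_realizer:
  fixes i k :: "'n::finite"
  assumes R: "iso_transversal R (Bset CARD('n) d)" and "size M \<le> d"
  shows "\<exists>!H\<in>R. 0 < embedding_count H i k M"
proof -
  obtain H' where H': "H' \<in> Bset CARD('n) d" "0 < embedding_count H' i k M"
    using exists_realization[OF \<open>size M \<le> d\<close>] by blast
  then obtain H1 where H1: "H1 \<in> R" "mgraph_iso H' H1"
    using R unfolding iso_transversal_def by blast
  have "embedding_count H1 i k M = embedding_count H' i k M"
    using embedding_count_transport[OF mem_BsetD(1)[OF H'(1)] H1(2) bij_id, of i k M]
    by (simp add: prod.map_id0)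
  then have ex: "\<exists>H\<in>R. 0 < embedding_count H i k M"
    using H'(2) H1(1) by (intro bexI[of _ H1]) simp_all
  have "H2 = H" if H: "H \<in> R" "0 < embedding_count H i k M"
    and H2: "H2 \<in> R" "0 < embedding_count H2 i k M" for H H2
  proof -
    have B: "H \<in> Bset CARD('n) d" "H2 \<in> Bset CARD('n) d"
      using R H(1) H2(1) unfolding iso_transversal_def by auto
    obtain j j2 where "j \<in> embeddings H i k" "j2 \<in> embeddings H2 i k"
      "edge_image j H = edge_image j2 H2"
      using H(2) H2(2) unfolding embedding_count_pos_iff by metis
    then have "mgraph_iso H H2"
      by (rule realizations_iso[OF mem_BsetD(1)[OF B(1)] mem_BsetD(1)[OF B(2)]
            mem_BsetD(4)[OF B(1)] mem_BsetD(4)[OF B(2)]])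
    moreover have "\<exists>!H'\<in>R. mgraph_iso H H'"
      using R B(1) unfolding iso_transversal_def by blast
    ultimately show ?thesis
      using H(1) H2(1) mgraph_iso_refl by blast
  qed
  then show ?thesis
    using ex by blast
qed

lemma sum_over_unique_realizer:
  fixes i k :: "'n::finite"
  assumes R: "iso_transversal R (Bset CARD('n) d)" and "size M \<le> d"
    and H1: "H1 \<in> R" "0 < embedding_count H1 i k M"
  shows "(\<Sum>H\<in>R. c H * real (embedding_count H i k M)) = c H1 * real (embedding_count H1 i k M)"
proof -
  have "finite R"
    using R by (rule finite_iso_transversal)
  moreover have "embedding_count H i k M = 0" if "H \<in> R - {H1}" for H
    using unique_realizer[OF R \<open>size M \<le> d\<close>, of i k] H1 that by auto
  ultimately show ?thesis
    using H1(1) by (simp add: sum.remove)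
qed

lemma Qmap_transversal_independent:
  fixes c :: "mgraph \<Rightarrow> real"
  assumes R: "iso_transversal R (Bset CARD('n::finite) d)"
    and zero: "\<And>X :: real^'n^'n. (\<Sum>H\<in>R. c H *\<^sub>R Qmap H X) = 0" and "H0 \<in> R"
  shows "c H0 = 0"
proof -
  have B: "\<And>H. H \<in> R \<Longrightarrow> H \<in> Bset CARD('n) d" and "finite R"
    using R finite_iso_transversal unfolding iso_transversal_def by auto
  obtain j0 :: "nat \<Rightarrow> 'n" where j0: "j0 \<in> embeddings H0 (j0 (out_a H0)) (j0 (out_b H0))"
    using exists_embedding mem_BsetD(2)[OF B[OF \<open>H0 \<in> R\<close>]] by blast
  define i0 k0 M0 where "i0 = j0 (out_a H0)" and "k0 = j0 (out_b H0)" and "M0 = edge_image j0 H0"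
  have pos: "0 < embedding_count H0 i0 k0 M0"
    using j0 unfolding embedding_count_pos_iff i0_def k0_def M0_def by blast
  have M0_size: "size M0 \<le> d"
    using mem_BsetD(3)[OF B[OF \<open>H0 \<in> R\<close>]] by (simp add: M0_def)
  have "(\<Sum>M\<in>{M. size M \<le> d}. (\<Sum>H\<in>R. c H * real (embedding_count H i0 k0 M)) * monomial M X) = 0"
    for X :: "real^'n^'n"
    using sum_Qmap_entry_expansion[OF \<open>finite R\<close> mem_BsetD(3)[OF B], of c X i0 k0] by (simp add: zero)
  then have "(\<Sum>H\<in>R. c H * real (embedding_count H i0 k0 M0)) = 0"
    by (rule monomials_linear_independent[OF finite_multisets_size_le]) (simp add: M0_size)
  then show ?thesis
    using sum_over_unique_realizer[OF R M0_size \<open>H0 \<in> R\<close> pos] pos by simp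
qed

lemma equivariant_coeff_invariant:
  fixes P :: "real^'n::finite^'n \<Rightarrow> real^'n^'n"
  assumes "equivariant P"
    and C: "\<And>i k X. P X $ i $ k = (\<Sum>M\<in>{M. size M \<le> d}. C i k M * monomial M X)"
    and g: "g permutes UNIV" and "size M \<le> d"
  shows "C (g i) (g k) (image_mset (map_prod g g) M) = C i k M"
proof -
  let ?T = "{M :: ('n \<times> 'n) multiset. size M \<le> d}"
  let ?g = "image_mset (map_prod g g)" and ?g' = "image_mset (map_prod (inv g) (inv g))"
  have inverses: "?g (?g' N) = N" "?g' (?g N) = N" for N
    by (simp_all add: multiset.map_comp map_prod.comp permutes_inv_o[OF g] prod.map_id0)
  have "(\<Sum>N\<in>?T. C i k N * monomial N X) = (\<Sum>N\<in>?T. C (g i) (g k) (?g N) * monomial N X)" for X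
  proof -
    have "P X $ i $ k = perm_act g (P X) $ g i $ g k"
      by (simp add: perm_act_def permutes_inverses(2)[OF g])
    also have "\<dots> = P (perm_act g X) $ g i $ g k"
      using \<open>equivariant P\<close> g unfolding equivariant_def by simp
    also have "\<dots> = (\<Sum>N\<in>?T. C (g i) (g k) N * monomial (?g' N) X)"
      unfolding C monomial_perm_act ..
    also have "\<dots> = (\<Sum>N\<in>?T. C (g i) (g k) (?g N) * monomial N X)"
      by (rule sum.reindex_bij_witness[where i = ?g and j = ?g']) (auto simp: inverses)
    finally show ?thesis
      unfolding C .
  qed
  from monomial_coeffs_unique[OF finite_multisets_size_le this] \<open>size M \<le> d\<close>
  show ?thesis
    by (simp only: mem_Collect_eq)
qed

lemma exists_permutation_extending:
  fixes e j :: "'a \<Rightarrow> 'n::finite"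
  assumes "finite V" and "inj_on e V" and "inj_on j V"
  obtains g where "g permutes UNIV" and "\<And>v. v \<in> V \<Longrightarrow> g (e v) = j v"
proof -
  have "card (UNIV - e ` V) = card (UNIV - j ` V)"
    using assms by (simp add: card_Diff_subset card_image)
  then obtain h where h: "bij_betw h (UNIV - e ` V) (UNIV - j ` V)"
    using finite_same_card_bij[OF finite finite] by blast
  define g where "g x = (if x \<in> e ` V then j (inv_into V e x) else h x)" for x
  have "bij_betw (j \<circ> inv_into V e) (e ` V) (j ` V)"
    using bij_betw_inv_into[OF inj_on_imp_bij_betw[OF assms(2)]] inj_on_imp_bij_betw[OF assms(3)]
    by (rule bij_betw_trans)
  then have "bij_betw g (e ` V) (j ` V)"
    by (rule bij_betw_cong[THEN iffD1, rotated]) (simp add: g_def)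
  moreover have "bij_betw g (UNIV - e ` V) (UNIV - j ` V)"
    using h by (rule bij_betw_cong[THEN iffD1, rotated]) (simp add: g_def)
  ultimately have "bij_betw g (e ` V \<union> (UNIV - e ` V)) (j ` V \<union> (UNIV - j ` V))"
    by (rule bij_betw_combine) auto
  then have "g permutes UNIV"
    by (intro bij_imp_permutes) auto
  moreover have "g (e v) = j v" if "v \<in> V" for v
    using assms(2) that by (simp add: g_def inv_into_f_f)
  ultimately show ?thesis
    using that by blast
qed

lemma embeddings_orbit:
  assumes "wf_mgraph H" and j0: "j0 \<in> embeddings H i0 k0" and j: "j \<in> embeddings H i k"
  obtains g where "g permutes (UNIV :: 'n::finite set)" "i = g i0" "k = g k0"
    "edge_image j H = image_mset (map_prod g g) (edge_image j0 H)"
proof -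
  obtain g :: "'n \<Rightarrow> 'n" where g: "g permutes UNIV" "\<And>v. v \<in> {0..<nodes H} \<Longrightarrow> g (j0 v) = j v"
    using exists_permutation_extending[of "{0..<nodes H}" j0 j] j0 j
    by (auto simp: embeddings_def)
  have "i = g i0" "k = g k0"
    using g(2) wf_mgraph_out_nodes[OF \<open>wf_mgraph H\<close>] j0 j by (auto simp: embeddings_def)
  moreover have "edge_image j H = edge_image (g \<circ> j0) H"
    using \<open>wf_mgraph H\<close> by (rule edge_image_cong) (simp add: g(2))
  ultimately show ?thesis
    using that g(1) by (simp add: edge_image_def multiset.map_comp map_prod.comp)
qed

lemma embedding_count_orbit_eq:
  fixes i0 k0 i k :: "'n::finite"
  assumes wf: "wf_mgraph H" and "j0 \<in> embeddings H i0 k0" and "j \<in> embeddings H i k"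
  shows "embedding_count H i k (edge_image j H) = embedding_count H i0 k0 (edge_image j0 H)"
proof -
  obtain g :: "'n \<Rightarrow> 'n" where "g permutes UNIV" "i = g i0" "k = g k0"
    "edge_image j H = image_mset (map_prod g g) (edge_image j0 H)"
    using embeddings_orbit[OF assms] .
  then show ?thesis
    using embedding_count_transport[OF wf mgraph_iso_refl permutes_bij] by simp
qed

lemma equivariant_coeff_orbit_eq:
  fixes P :: "real^'n::finite^'n \<Rightarrow> real^'n^'n" and i0 k0 i k :: 'n
  assumes "equivariant P"
    and C: "\<And>i k X. P X $ i $ k = (\<Sum>M\<in>{M. size M \<le> d}. C i k M * monomial M X)"
    and wf: "wf_mgraph H" and "size (edges H) \<le> d"
    and "j0 \<in> embeddings H i0 k0" and "j \<in> embeddings H i k"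
  shows "C i k (edge_image j H) = C i0 k0 (edge_image j0 H)"
proof -
  obtain g :: "'n \<Rightarrow> 'n" where "g permutes UNIV" "i = g i0" "k = g k0"
    "edge_image j H = image_mset (map_prod g g) (edge_image j0 H)"
    using embeddings_orbit[OF wf assms(5,6)] .
  then show ?thesis
    using equivariant_coeff_invariant[OF \<open>equivariant P\<close> C] \<open>size (edges H) \<le> d\<close> by simp
qed

(* The coefficient of H is read off at a base embedding of H; it is correct at every entry and
   monomial because both the coefficients of P and the embedding counts are constant on orbits. *)
lemma Qmap_transversal_spanning:
  fixes P :: "real^'n::finite^'n \<Rightarrow> real^'n^'n"
  assumes R: "iso_transversal R (Bset CARD('n) d)" and "equivariant P" and "polymap d P"
  shows "\<exists>c. \<forall>X. P X = (\<Sum>H\<in>R. c H *\<^sub>R Qmap H X)"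
proof -
  let ?T = "{M :: ('n \<times> 'n) multiset. size M \<le> d}"
  obtain C where C: "\<And>i k X. P X $ i $ k = (\<Sum>M\<in>?T. C i k M * monomial M X)"
    using \<open>polymap d P\<close> unfolding polymap_def by metis
  have B: "\<And>H. H \<in> R \<Longrightarrow> H \<in> Bset CARD('n) d" and "finite R"
    using R finite_iso_transversal unfolding iso_transversal_def by auto
  have "\<forall>H\<in>R. \<exists>j :: nat \<Rightarrow> 'n. j \<in> embeddings H (j (out_a H)) (j (out_b H))"
    using exists_embedding mem_BsetD(2)[OF B] by blast
  from bchoice[OF this] obtain base :: "mgraph \<Rightarrow> nat \<Rightarrow> 'n"
    where base: "\<And>H. H \<in> R \<Longrightarrow> base H \<in> embeddings H (base H (out_a H)) (base H (out_b H))"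
    by blast
  define c where "c H = C (base H (out_a H)) (base H (out_b H)) (edge_image (base H) H)
      / real (embedding_count H (base H (out_a H)) (base H (out_b H)) (edge_image (base H) H))" for H
  have coeff: "C i k M = (\<Sum>H\<in>R. c H * real (embedding_count H i k M))" if M: "M \<in> ?T" for i k M
  proof -
    obtain H1 where H1: "H1 \<in> R" "0 < embedding_count H1 i k M"
      using unique_realizer[OF R, of M i k] M by auto
    then obtain j where j: "j \<in> embeddings H1 i k" and "edge_image j H1 = M"
      unfolding embedding_count_pos_iff by blast
    have "C i k M = C (base H1 (out_a H1)) (base H1 (out_b H1)) (edge_image (base H1) H1)"
      using equivariant_coeff_orbit_eq[OF \<open>equivariant P\<close> C mem_BsetD(1,3)[OF B[OF H1(1)]] base[OF H1(1)] j]
      by (simp add: \<open>edge_image j H1 = M\<close>)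
    moreover have "embedding_count H1 i k M
        = embedding_count H1 (base H1 (out_a H1)) (base H1 (out_b H1)) (edge_image (base H1) H1)"
      using embedding_count_orbit_eq[OF mem_BsetD(1)[OF B[OF H1(1)]] base[OF H1(1)] j]
      by (simp add: \<open>edge_image j H1 = M\<close>)
    ultimately have "C i k M = c H1 * real (embedding_count H1 i k M)"
      using H1(2) by (simp add: c_def)
    then show ?thesis
      using sum_over_unique_realizer[OF R _ H1] M by simp
  qed
  have "P X $ i $ k = (\<Sum>H\<in>R. c H *\<^sub>R Qmap H X) $ i $ k" for X i k
  proof -
    have "P X $ i $ k = (\<Sum>M\<in>?T. (\<Sum>H\<in>R. c H * real (embedding_count H i k M)) * monomial M X)"
      unfolding C by (intro sum.cong refl) (simp add: coeff)
    also have "\<dots> = (\<Sum>H\<in>R. c H *\<^sub>R Qmap H X) $ i $ k"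
      by (rule sum_Qmap_entry_expansion[symmetric, OF \<open>finite R\<close> mem_BsetD(3)[OF B]])
    finally show ?thesis .
  qed
  then show ?thesis
    by (auto simp: vec_eq_iff)
qed

section \<open>Symmetrization of M_H\<close>

lemma card_permutations_extending:
  fixes e j :: "'a \<Rightarrow> 'n::finite"
  assumes "finite V" and "inj_on e V" and "inj_on j V"
  shows "card {g. g permutes (UNIV :: 'n set) \<and> (\<forall>v\<in>V. g (e v) = j v)} = fact (CARD('n) - card V)"
proof -
  obtain g0 where g0: "g0 permutes UNIV" "\<And>v. v \<in> V \<Longrightarrow> g0 (e v) = j v"
    using exists_permutation_extending[OF assms] by blast
  let ?C = "UNIV - e ` V"
  have "{g. g permutes UNIV \<and> (\<forall>v\<in>V. g (e v) = j v)} = (\<lambda>p. g0 \<circ> p) ` {p. p permutes ?C}"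
  proof (intro equalityI subsetI)
    fix g assume g: "g \<in> {g. g permutes UNIV \<and> (\<forall>v\<in>V. g (e v) = j v)}"
    have "inv g0 \<circ> g permutes ?C"
    proof (rule permutes_superset)
      show "inv g0 \<circ> g permutes UNIV"
        using g permutes_inv[OF g0(1)] by (blast intro: permutes_compose)
      show "(inv g0 \<circ> g) x = x" if x: "x \<in> UNIV - ?C" for x
      proof -
        obtain v where "v \<in> V" "x = e v"
          using x by auto
        then show ?thesis
          using g g0(2)[symmetric] permutes_inverses(2)[OF g0(1)] by simp
      qed
    qed
    moreover have "g = g0 \<circ> (inv g0 \<circ> g)"
      by (simp add: comp_assoc[symmetric] permutes_inv_o(1)[OF g0(1)])
    ultimately show "g \<in> (\<lambda>p. g0 \<circ> p) ` {p. p permutes ?C}"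
      by blast
  next
    fix g assume "g \<in> (\<lambda>p. g0 \<circ> p) ` {p. p permutes ?C}"
    then obtain p where p: "p permutes ?C" and "g = g0 \<circ> p"
      by blast
    moreover have "g0 \<circ> p permutes UNIV"
      using permutes_subset[OF p] g0(1) by (blast intro: permutes_compose)
    ultimately show "g \<in> {g. g permutes UNIV \<and> (\<forall>v\<in>V. g (e v) = j v)}"
      using permutes_not_in[OF p] g0(2) by auto
  qed
  moreover have "inj_on (\<lambda>p. g0 \<circ> p) {p. p permutes ?C}"
    using permutes_inj[OF g0(1)] by (auto intro!: inj_onI simp: fun_eq_iff inj_eq)
  ultimately have "card {g. g permutes UNIV \<and> (\<forall>v\<in>V. g (e v) = j v)} = card {p. p permutes ?C}"
    by (simp add: card_image)
  also have "\<dots> = fact (CARD('n) - card V)"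
    using assms by (simp add: card_permutations card_Diff_subset card_image)
  finally show ?thesis .
qed

lemma perm_act_Mmap_entry:
  assumes "g permutes UNIV"
  shows "perm_act g (Mmap H e (perm_act (inv g) X)) $ i $ k
    = (if g (e (out_a H)) = i \<and> g (e (out_b H)) = k then monomial (edge_image (g \<circ> e) H) X else 0)"
  using assms
  by (auto simp: perm_act_def Mmap_def monomial_def edge_image_def permutes_inv_eq permutes_inv_inv
      multiset.map_comp o_def case_prod_unfold)

lemma finite_injections:
  assumes "finite V"
  shows "finite {j \<in> V \<rightarrow>\<^sub>E (UNIV :: 'n::finite set). inj_on j V}"
proof -
  have "finite (V \<rightarrow>\<^sub>E (UNIV :: 'n set))"
    using assms by (simp add: finite_PiE)
  then show ?thesis
    by (rule finite_subset[rotated]) blast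
qed

lemma sum_permutations_restrict_comp:
  fixes e :: "'a \<Rightarrow> 'n::finite" and h :: "('a \<Rightarrow> 'n) \<Rightarrow> real"
  assumes "finite V" and e: "inj_on e V"
  shows "(\<Sum>g\<in>{g. g permutes (UNIV :: 'n set)}. h (restrict (g \<circ> e) V))
    = fact (CARD('n) - card V) * (\<Sum>j\<in>{j \<in> V \<rightarrow>\<^sub>E UNIV. inj_on j V}. h j)"
proof -
  let ?P = "{g. g permutes (UNIV :: 'n set)}" and ?I = "{j \<in> V \<rightarrow>\<^sub>E (UNIV :: 'n set). inj_on j V}"
  have fiber: "card {g \<in> ?P. restrict (g \<circ> e) V = j} = fact (CARD('n) - card V)" if j: "j \<in> ?I" for j
  proof -
    have "restrict (g \<circ> e) V = j \<longleftrightarrow> (\<forall>v\<in>V. g (e v) = j v)" for g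
    proof
      assume "\<forall>v\<in>V. g (e v) = j v"
      then have "restrict (g \<circ> e) V = restrict j V"
        by (intro restrict_ext) simp
      also have "\<dots> = j"
        using j by (intro PiE_restrict) blast
      finally show "restrict (g \<circ> e) V = j" .
    qed auto
    then have "{g \<in> ?P. restrict (g \<circ> e) V = j} = {g. g permutes UNIV \<and> (\<forall>v\<in>V. g (e v) = j v)}"
      by blast
    then show ?thesis
      using card_permutations_extending[OF \<open>finite V\<close> e] j by simp
  qed
  have "(\<Sum>g\<in>?P. h (restrict (g \<circ> e) V)) = (\<Sum>j\<in>?I. \<Sum>g\<in>{g \<in> ?P. restrict (g \<circ> e) V = j}. h (restrict (g \<circ> e) V))"
  proof (rule sum.group[symmetric])
    show "finite ?P"
      by (simp add: finite_permutations)
    show "finite ?I"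
      using \<open>finite V\<close> by (rule finite_injections)
    show "(\<lambda>g. restrict (g \<circ> e) V) ` ?P \<subseteq> ?I"
    proof (rule image_subsetI)
      fix g assume "g \<in> ?P"
      then have "inj_on (g \<circ> e) V"
        using e by (intro comp_inj_on) (auto intro: inj_on_subset[OF permutes_inj])
      then show "restrict (g \<circ> e) V \<in> ?I"
        by simp
    qed
  qed
  also have "\<dots> = (\<Sum>j\<in>?I. fact (CARD('n) - card V) * h j)"
  proof (rule sum.cong[OF refl])
    fix j assume "j \<in> ?I"
    have "(\<Sum>g\<in>{g \<in> ?P. restrict (g \<circ> e) V = j}. h (restrict (g \<circ> e) V))
        = (\<Sum>g\<in>{g \<in> ?P. restrict (g \<circ> e) V = j}. h j)"
      by (rule sum.cong) auto
    then show "(\<Sum>g\<in>{g \<in> ?P. restrict (g \<circ> e) V = j}. h (restrict (g \<circ> e) V))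
        = fact (CARD('n) - card V) * h j"
      using fiber[OF \<open>j \<in> ?I\<close>] by simp
  qed
  finally show ?thesis
    by (simp add: sum_distrib_left)
qed

lemma Qmap_symmetrization:
  fixes X :: "real^'n::finite^'n" and e :: "nat \<Rightarrow> 'n"
  assumes wf: "wf_mgraph H" and e: "inj_on e {0..<nodes H}"
  shows "real (fact (CARD('n) - nodes H)) *\<^sub>R Qmap H X
    = (\<Sum>g\<in>{g. g permutes (UNIV :: 'n set)}. perm_act g (Mmap H e (perm_act (inv g) X)))"
proof -
  let ?V = "{0..<nodes H}" and ?P = "{g. g permutes (UNIV :: 'n set)}"
  let ?I = "{j \<in> ?V \<rightarrow>\<^sub>E (UNIV :: 'n set). inj_on j ?V}"
  have "(\<Sum>g\<in>?P. perm_act g (Mmap H e (perm_act (inv g) X))) $ i $ k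
      = fact (CARD('n) - nodes H) * Qmap H X $ i $ k" for i k
  proof -
    define h where "h j = (if j (out_a H) = i \<and> j (out_b H) = k then monomial (edge_image j H) X else 0)"
      for j :: "nat \<Rightarrow> 'n"
    have "(\<Sum>g\<in>?P. perm_act g (Mmap H e (perm_act (inv g) X))) $ i $ k = (\<Sum>g\<in>?P. h (restrict (g \<circ> e) ?V))"
    proof (simp only: sum_component, rule sum.cong[OF refl])
      fix g assume "g \<in> ?P"
      moreover have "edge_image (restrict (g \<circ> e) ?V) H = edge_image (g \<circ> e) H"
        using wf by (rule edge_image_cong) simp
      ultimately show "perm_act g (Mmap H e (perm_act (inv g) X)) $ i $ k = h (restrict (g \<circ> e) ?V)"
        using wf_mgraph_out_nodes[OF wf] by (simp add: perm_act_Mmap_entry h_def)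
    qed
    also have "\<dots> = fact (CARD('n) - nodes H) * (\<Sum>j\<in>?I. h j)"
      using sum_permutations_restrict_comp[of ?V e h] e by simp
    also have "(\<Sum>j\<in>?I. h j) = (\<Sum>j\<in>{j \<in> ?I. j (out_a H) = i \<and> j (out_b H) = k}. monomial (edge_image j H) X)"
      unfolding h_def by (rule sum.inter_filter[symmetric, OF finite_injections]) simp
    also have "{j \<in> ?I. j (out_a H) = i \<and> j (out_b H) = k} = embeddings H i k"
      by (auto simp: embeddings_def)
    finally show ?thesis
      by (simp add: Qmap_entry)
  qed
  then show ?thesis
    by (simp add: vec_eq_iff)
qed

theorem mainTheorem2:
  fixes d :: nat
  defines "n \<equiv> CARD('n::finite)"
  shows
   "(\<forall>H \<in> Bset n d. equivariant (Qmap H :: real^'n^'n \<Rightarrow> real^'n^'n) \<and> polymap d (Qmap H :: real^'n^'n \<Rightarrow> real^'n^'n))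
    \<and> (\<forall>H \<in> Bset n d. \<forall>H' \<in> Bset n d. mgraph_iso H H' \<longrightarrow>
          (Qmap H :: real^'n^'n \<Rightarrow> real^'n^'n) = Qmap H')
    \<and> (\<forall>R. R \<subseteq> Bset n d \<and> (\<forall>H \<in> Bset n d. \<exists>!H' \<in> R. mgraph_iso H H') \<longrightarrow>
          finite R
        \<and> (\<forall>c. (\<forall>X :: real^'n^'n. (\<Sum>H \<in> R. c H *\<^sub>R Qmap H X) = 0) \<longrightarrow> (\<forall>H \<in> R. c H = 0))
        \<and> (\<forall>P :: real^'n^'n \<Rightarrow> real^'n^'n. equivariant P \<and> polymap d P \<longrightarrow>
              (\<exists>c. \<forall>X. P X = (\<Sum>H \<in> R. c H *\<^sub>R Qmap H X))))
    \<and> (\<forall>H \<in> Bset n d. \<forall>e :: nat \<Rightarrow> 'n. inj_on e {0..<nodes H} \<longrightarrow>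
          (\<forall>X :: real^'n^'n. real (fact (n - nodes H)) *\<^sub>R Qmap H X
             = (\<Sum>g \<in> {g. g permutes (UNIV :: 'n set)}. perm_act g (Mmap H e (perm_act (inv g) X)))))"
  unfolding n_def
proof (intro conjI ballI allI impI)
  show "equivariant (Qmap H :: real^'n^'n \<Rightarrow> real^'n^'n)" if "H \<in> Bset CARD('n) d" for H
    using Qmap_equivariant mem_BsetD(1)[OF that] .
  show "polymap d (Qmap H :: real^'n^'n \<Rightarrow> real^'n^'n)" if "H \<in> Bset CARD('n) d" for H
    using Qmap_polymap mem_BsetD(3)[OF that] .
  show "(Qmap H :: real^'n^'n \<Rightarrow> real^'n^'n) = Qmap H'"
    if "H \<in> Bset CARD('n) d" and "mgraph_iso H H'" for H H'
    using Qmap_iso_invariant mem_BsetD(1)[OF that(1)] that(2) .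
  show "real (fact (CARD('n) - nodes H)) *\<^sub>R Qmap H X
      = (\<Sum>g\<in>{g. g permutes UNIV}. perm_act g (Mmap H e (perm_act (inv g) X)))"
    if "H \<in> Bset CARD('n) d" and "inj_on e {0..<nodes H}" for H and e :: "nat \<Rightarrow> 'n" and X
    using Qmap_symmetrization mem_BsetD(1)[OF that(1)] that(2) .
  fix R assume "R \<subseteq> Bset CARD('n) d \<and> (\<forall>H\<in>Bset CARD('n) d. \<exists>!H'\<in>R. mgraph_iso H H')"
  then have R: "iso_transversal R (Bset CARD('n) d)"
    by (simp add: iso_transversal_def)
  then show "finite R"
    by (rule finite_iso_transversal)
  show "c H = 0" if "\<forall>X :: real^'n^'n. (\<Sum>H\<in>R. c H *\<^sub>R Qmap H X) = 0" and "H \<in> R" for c H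
    using Qmap_transversal_independent[OF R] that by blast
  show "\<exists>c. \<forall>X. P X = (\<Sum>H\<in>R. c H *\<^sub>R Qmap H X)"
    if "equivariant P \<and> polymap d P" for P :: "real^'n^'n \<Rightarrow> real^'n^'n"
    using Qmap_transversal_spanning[OF R] that by blast
qed

end
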